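(* Let $d\in\mathbb{N}$ and let $\mathcal{P}$ be a partition of $\mathbb{R}^{d}$. Suppose there exists $D\in(0,\infty)$ such that every $X\in\mathcal{P}$ satisfies $\operatorname{diam}(X)<D$. Then for any function $\epsilon:\mathbb{R}^{d}\to(0,\infty)$ there exists $\vec{p}\in\mathbb{R}^{d}$ such that $|\mathcal{N}_{\epsilon(\vec{p})}(\vec{p})|\geq d+1$.
   Context: On $\mathbb{R}^d$ use $d_{max}(\vec{x},\vec{y})=\max_i|x_i-y_i|$; $\operatorname{diam}(X)=\sup\{d_{max}(\vec{x},\vec{y}):\vec{x},\vec{y}\in X\}$; $\overline{B}_{r}(\vec{p})=\{\vec{x}: d_{max}(\vec{x},\vec{p})\le r\}$. For a partition $\mathcal{P}$ and $r>0$, $\mathcal{N}_{r}(\vec{p})=\{X\in\mathcal{P}: X\cap\overline{B}_{r}(\vec{p})\neq\emptyset\}$. *)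

theory Defs
  imports "HOL-Analysis.Analysis"
begin

definition dmax :: "real^'n \<Rightarrow> real^'n \<Rightarrow> real" where
  "dmax x y = Max (range (\<lambda>i. \<bar>x $ i - y $ i\<bar>))"

text \<open>Diameter w.r.t. dmax, valued in the extended reals (so unbounded sets have diameter infinity).\<close>
definition diam_max :: "(real^'n) set \<Rightarrow> ereal" where
  "diam_max X = (SUP xy \<in> X \<times> X. ereal (dmax (fst xy) (snd xy)))"

definition cball_max :: "real^'n \<Rightarrow> real \<Rightarrow> (real^'n) set" where
  "cball_max p r = {x. dmax x p \<le> r}"

definition is_partition :: "'a set set \<Rightarrow> 'a set \<Rightarrow> bool" where
  "is_partition P S \<longleftrightarrow> (\<forall>X\<in>P. X \<noteq> {}) \<and>
     (\<forall>X\<in>P. \<forall>Y\<in>P. X \<noteq> Y \<longrightarrow> X \<inter> Y = {}) \<and> \<Union>P = S"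

definition nbhd_sets :: "(real^'n) set set \<Rightarrow> real \<Rightarrow> real^'n \<Rightarrow> (real^'n) set set" where
  "nbhd_sets P r p = {X \<in> P. X \<inter> cball_max p r \<noteq> {}}"

end

theory Submission
  imports Defs
begin

text \<open>
  Lay a grid of mesh \<open>D / p\<close> over the cube \<open>[0, D]\<^sup>d\<close> and label a grid point by the block
  containing it, coordinate \<open>i\<close> of the label recording whether that block reaches the half-space
  \<open>x\<^sub>i \<le> 0\<close>. Since blocks have diameter \<open>< D\<close>, this labelling satisfies the boundary conditions
  of Kuhn's combinatorial (Sperner) lemma, which yields a grid cell carrying \<open>d + 1\<close> distinct
  labels, i.e. meeting \<open>d + 1\<close> distinct blocks. Letting the mesh tend to zero, compactness of the
  cube gives a point all of whose neighbourhoods, in particular the one of radius \<open>\<epsilon>(p)\<close>, meet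
  \<open>d + 1\<close> blocks.
\<close>

lemma kuhn_simplex_distinct_labels:
  fixes lab :: "(nat \<Rightarrow> nat) \<Rightarrow> nat \<Rightarrow> nat"
  assumes "0 < p"
    and "\<forall>x j. (\<forall>j. x j \<le> p) \<and> j < n \<and> x j = 0 \<longrightarrow> lab x j = 0"
    and "\<forall>x j. (\<forall>j. x j \<le> p) \<and> j < n \<and> x j = p \<longrightarrow> lab x j = 1"
  shows "\<exists>b S. (\<forall>j<n. b j < p) \<and> finite S \<and> card S = Suc n \<and> inj_on lab S \<and>
     (\<forall>x\<in>S. \<forall>j<n. b j \<le> x j \<and> x j \<le> b j + 1)"
proof -
  have "odd (card {s. ksimplex p n s \<and> (reduced n \<circ> lab) ` s = {..n}})"
    using kuhn_combinatorial[OF assms] .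
  then have "{s. ksimplex p n s \<and> (reduced n \<circ> lab) ` s = {..n}} \<noteq> {}"
    by (metis card.empty odd_pos gr_implies_not0)
  then obtain s where ks: "ksimplex p n s" and labels: "(reduced n \<circ> lab) ` s = {..n}"
    by auto
  then obtain b u where "kuhn_simplex p n b u s"
    by (auto elim: ksimplex.cases)
  then interpret kuhn_simplex p n b u s .
  have card_s: "card s = Suc n"
    using ksimplex_card[OF ks] .
  then have "finite s"
    using card.infinite by fastforce
  then have "inj_on (reduced n \<circ> lab) s"
    by (rule eq_card_imp_inj_on) (simp only: labels card_s card_atMost)
  then have "inj_on lab s"
    by (rule inj_on_imageI2)
  moreover have "\<forall>x\<in>s. \<forall>j<n. b j \<le> x j \<and> x j \<le> b j + 1"
    unfolding s_eq enum_def by auto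
  moreover have "\<forall>j<n. b j < p"
    using base by auto
  ultimately show ?thesis
    using \<open>finite s\<close> card_s by blast
qed

lemma kuhn_simplex_distinct_labels_finite:
  fixes lab :: "('i::finite \<Rightarrow> nat) \<Rightarrow> 'i \<Rightarrow> nat"
  assumes "0 < p"
    and lab0: "\<And>x i. \<forall>j. x j \<le> p \<Longrightarrow> x i = 0 \<Longrightarrow> lab x i = 0"
    and lab1: "\<And>x i. \<forall>j. x j \<le> p \<Longrightarrow> x i = p \<Longrightarrow> lab x i = 1"
  shows "\<exists>b S. (\<forall>i. b i < p) \<and> finite S \<and> card S = CARD('i) + 1 \<and> inj_on lab S \<and>
     (\<forall>x\<in>S. \<forall>i. b i \<le> x i \<and> x i \<le> b i + 1)"
proof -
  define n where "n = CARD('i)"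
  obtain e where e: "bij_betw e {0..<n} (UNIV :: 'i set)"
    using ex_bij_betw_nat_finite[of "UNIV :: 'i set"] by (auto simp: n_def)
  define idx where "idx = inv_into {0..<n} e"
  have idx: "idx i < n" for i
    using e unfolding idx_def
    by (metis atLeastLessThan_iff bij_betw_def inv_into_into UNIV_I)
  have idx_e: "idx (e j) = j" if "j < n" for j
    using e that unfolding idx_def by (simp add: bij_betw_inv_into_left)
  define T where "T y = (\<lambda>i. y (idx i))" for y :: "nat \<Rightarrow> nat"
  define lab' where "lab' y j = lab (T y) (e j)" for y j
  have T_idx: "T y (e j) = y j" if "j < n" for y j
    using idx_e[OF that] by (simp add: T_def)
  have T_le: "\<forall>i. T y i \<le> p" if "\<forall>j. y j \<le> p" for y
    using that by (simp add: T_def)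
  have "\<forall>y j. (\<forall>j. y j \<le> p) \<and> j < n \<and> y j = 0 \<longrightarrow> lab' y j = 0"
    using lab0 T_idx T_le unfolding lab'_def by metis
  moreover have "\<forall>y j. (\<forall>j. y j \<le> p) \<and> j < n \<and> y j = p \<longrightarrow> lab' y j = 1"
    using lab1 T_idx T_le unfolding lab'_def by metis
  ultimately have "\<exists>b S. (\<forall>j<n. b j < p) \<and> finite S \<and> card S = Suc n \<and> inj_on lab' S \<and>
      (\<forall>y\<in>S. \<forall>j<n. b j \<le> y j \<and> y j \<le> b j + 1)"
    by (rule kuhn_simplex_distinct_labels[OF \<open>0 < p\<close>])
  then obtain b S where b: "\<forall>j<n. b j < p" and S: "finite S" "card S = Suc n"
      "inj_on lab' S" and cell: "\<forall>y\<in>S. \<forall>j<n. b j \<le> y j \<and> y j \<le> b j + 1"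
    by blast
  have inj: "inj_on (lab \<circ> T) S"
  proof (rule inj_onI)
    fix y y' assume "y \<in> S" "y' \<in> S" "(lab \<circ> T) y = (lab \<circ> T) y'"
    then have "lab' y = lab' y'"
      by (simp add: lab'_def fun_eq_iff)
    then show "y = y'"
      using inj_onD[OF S(3)] \<open>y \<in> S\<close> \<open>y' \<in> S\<close> by blast
  qed
  have "inj_on lab (T ` S)"
    using inj by (rule inj_on_imageI)
  moreover have "card (T ` S) = card S"
    using inj_on_imageI2[OF inj] by (rule card_image)
  moreover have "\<forall>i. T b i < p" "\<forall>x\<in>T ` S. \<forall>i. T b i \<le> x i \<and> x i \<le> T b i + 1"
    using b cell idx(1) unfolding T_def by auto
  ultimately show ?thesis
    using S n_def by (intro exI[of _ "T b"] exI[of _ "T ` S"]) simp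
qed

lemma abs_component_diff_le_dmax: "\<bar>x $ i - y $ i\<bar> \<le> dmax x y"
  unfolding dmax_def by (rule Max_ge) auto

lemma dmax_le_iff: "dmax x y \<le> r \<longleftrightarrow> (\<forall>i. \<bar>x $ i - y $ i\<bar> \<le> r)"
  unfolding dmax_def by (subst Max_le_iff) auto

lemma dmax_le_dist: "dmax x y \<le> dist x y"
  unfolding dmax_le_iff using dist_vec_nth_le[of x _ y] by (simp add: dist_real_def)

lemma dmax_triangle: "dmax x z \<le> dmax x y + dmax y z"
  unfolding dmax_le_iff
proof
  fix i
  have "\<bar>x $ i - z $ i\<bar> \<le> \<bar>x $ i - y $ i\<bar> + \<bar>y $ i - z $ i\<bar>"
    by arith
  also have "\<dots> \<le> dmax x y + dmax y z"
    using abs_component_diff_le_dmax abs_component_diff_le_dmax by (rule add_mono)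
  finally show "\<bar>x $ i - z $ i\<bar> \<le> dmax x y + dmax y z" .
qed

lemma dmax_less_if_diam_max_less:
  assumes "diam_max X < ereal D" "x \<in> X" "y \<in> X"
  shows "dmax x y < D"
proof -
  have "ereal (dmax x y) \<le> diam_max X"
    unfolding diam_max_def using assms(2,3) by (intro SUP_upper2[of "(x, y)"]) auto
  with assms(1) have "ereal (dmax x y) < ereal D"
    by (rule le_less_trans[rotated])
  then show ?thesis
    by simp
qed

lemma grid_cell_meets_distinct_fibres:
  fixes blk :: "real^'n \<Rightarrow> 'a" and p :: nat
  assumes "0 < p"
    and fibres: "\<And>x y. blk x = blk y \<Longrightarrow> dmax x y < D"
  shows "\<exists>c\<in>cbox 0 (\<chi> i. D). \<exists>S. finite S \<and> card S = CARD('n) + 1 \<and> inj_on blk S \<and>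
     (\<forall>x\<in>S. dmax x c \<le> D / p)"
proof -
  have "0 < D"
    using fibres[of 0 0] abs_component_diff_le_dmax[of "0 :: real^'n" undefined 0] by simp
  define h where "h = D / p"
  have "0 < h" "h * p = D"
    using \<open>0 < D\<close> \<open>0 < p\<close> by (auto simp: h_def)
  define g where "g x = (\<chi> i. h * real (x i))" for x :: "'n \<Rightarrow> nat"
  define lab where "lab = (\<lambda>x i. if \<exists>y. blk y = blk (g x) \<and> y $ i \<le> 0 then 0 else 1 :: nat)"
  have "lab x i = 0" if "x i = 0" for x i
    using that unfolding lab_def g_def by auto
  moreover have "lab x i = 1" if "x i = p" for x i
  proof -
    \<comment> \<open>no block reaches from the face \<open>x\<^sub>i = D\<close> to the half-space \<open>x\<^sub>i \<le> 0\<close>\<close>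
    have "y $ i > 0" if "blk y = blk (g x)" for y
      using fibres[OF that] abs_component_diff_le_dmax[of y i "g x"] \<open>x i = p\<close> \<open>h * p = D\<close>
      by (simp add: g_def)
    then show ?thesis
      unfolding lab_def by force
  qed
  ultimately have "\<exists>b S. (\<forall>i. b i < p) \<and> finite S \<and> card S = CARD('n) + 1 \<and> inj_on lab S \<and>
      (\<forall>x\<in>S. \<forall>i. b i \<le> x i \<and> x i \<le> b i + 1)"
    by (rule kuhn_simplex_distinct_labels_finite[OF \<open>0 < p\<close>])
  then obtain b S where b: "\<forall>i. b i < p" and S: "finite S" "card S = CARD('n) + 1"
      "inj_on lab S" and cell: "\<forall>x\<in>S. \<forall>i. b i \<le> x i \<and> x i \<le> b i + 1"
    by blast
  have inj: "inj_on (blk \<circ> g) S"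
  proof (rule inj_onI)
    fix x x' assume "x \<in> S" "x' \<in> S" "(blk \<circ> g) x = (blk \<circ> g) x'"
    then have "lab x = lab x'"
      by (simp add: lab_def)
    then show "x = x'"
      using inj_onD[OF S(3)] \<open>x \<in> S\<close> \<open>x' \<in> S\<close> by blast
  qed
  have "inj_on blk (g ` S)"
    using inj by (rule inj_on_imageI)
  moreover have "card (g ` S) = card S"
    using inj_on_imageI2[OF inj] by (rule card_image)
  moreover have "g b \<in> cbox 0 (\<chi> i. D)"
    using b \<open>0 < h\<close> \<open>h * p = D\<close> by (auto simp: g_def mem_box_cart less_imp_le)
  moreover have "dmax (g x) (g b) \<le> D / p" if "x \<in> S" for x
  proof -
    have "\<bar>real (x i) - real (b i)\<bar> \<le> 1" for i
    proof -
      have "b i \<le> x i \<and> x i \<le> b i + 1"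
        using cell that by blast
      then show ?thesis
        by linarith
    qed
    then have "\<bar>h * real (x i) - h * real (b i)\<bar> \<le> h" for i
      using \<open>0 < h\<close> mult_left_le[of _ h]
      by (simp add: abs_mult flip: right_diff_distrib)
    then show ?thesis
      by (simp add: dmax_le_iff g_def h_def)
  qed
  ultimately show ?thesis
    using S by (intro bexI[of _ "g b"] exI[of _ "g ` S"]) auto
qed

lemma compact_cluster_of_witnesses:
  fixes K :: "'a::metric_space set"
  assumes "compact K"
    and witness: "\<And>\<delta>. \<delta> > 0 \<Longrightarrow> \<exists>c\<in>K. A c \<delta>"
    and mono: "\<And>c \<delta> \<delta>'. A c \<delta> \<Longrightarrow> \<delta> \<le> \<delta>' \<Longrightarrow> A c \<delta>'"
  shows "\<exists>z. \<forall>r>0. \<exists>c. dist c z < r \<and> A c r"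
proof -
  have "\<forall>k. \<exists>c. c \<in> K \<and> A c (inverse (real (Suc k)))"
    using witness[of "inverse (real (Suc _))"] by auto
  then obtain c where c: "\<And>k. c k \<in> K \<and> A (c k) (inverse (real (Suc k)))"
    by metis
  then obtain z h where "strict_mono h" "(c \<circ> h) \<longlonglongrightarrow> z"
    using compact_imp_seq_compact[OF \<open>compact K\<close>] by (metis seq_compactE)
  have "\<exists>c. dist c z < r \<and> A c r" if "r > 0" for r
  proof -
    have "\<forall>\<^sub>F m in sequentially. dist ((c \<circ> h) m) z < r"
      using \<open>(c \<circ> h) \<longlonglongrightarrow> z\<close> \<open>r > 0\<close> by (rule tendstoD)
    moreover have "\<forall>\<^sub>F m in sequentially. inverse (real (Suc (h m))) < r"
      using LIMSEQ_subseq_LIMSEQ[OF LIMSEQ_inverse_real_of_nat \<open>strict_mono h\<close>] \<open>r > 0\<close>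
      by (auto dest: order_tendstoD(2))
    ultimately have "\<forall>\<^sub>F m in sequentially. dist ((c \<circ> h) m) z < r \<and> inverse (real (Suc (h m))) < r"
      by (rule eventually_conj)
    then obtain m where "dist (c (h m)) z < r" "inverse (real (Suc (h m))) < r"
      by (auto dest: eventually_happens'[OF sequentially_bot])
    then show ?thesis
      using c mono less_imp_le by blast
  qed
  then show ?thesis
    by blast
qed

lemma exists_point_near_distinct_fibres:
  fixes blk :: "real^'n \<Rightarrow> 'a" and \<epsilon> :: "real^'n \<Rightarrow> real"
  assumes fibres: "\<And>x y. blk x = blk y \<Longrightarrow> dmax x y < D"
    and "\<forall>z. \<epsilon> z > 0"
  shows "\<exists>z S. finite S \<and> card S = CARD('n) + 1 \<and> inj_on blk S \<and> (\<forall>x\<in>S. dmax x z \<le> \<epsilon> z)"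
proof -
  define A where "A c \<delta> \<longleftrightarrow> (\<exists>S. finite S \<and> card S = CARD('n) + 1 \<and> inj_on blk S \<and>
      (\<forall>x\<in>S. dmax x c \<le> \<delta>))" for c \<delta>
  have witness: "\<exists>c\<in>cbox 0 (\<chi> i. D). A c \<delta>" if "\<delta> > 0" for \<delta>
  proof -
    obtain n :: nat where "D / \<delta> < n"
      using reals_Archimedean2 by blast
    then have "D / Suc n \<le> \<delta>"
      using that by (simp add: field_simps)
    moreover obtain c S where "c \<in> cbox 0 (\<chi> i. D)" "finite S" "card S = CARD('n) + 1"
        "inj_on blk S" "\<forall>x\<in>S. dmax x c \<le> D / Suc n"
      using grid_cell_meets_distinct_fibres[OF zero_less_Suc fibres] by blast
    ultimately show ?thesis
      unfolding A_def by (meson order_trans)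
  qed
  have mono: "A c \<delta> \<Longrightarrow> \<delta> \<le> \<delta>' \<Longrightarrow> A c \<delta>'" for c \<delta> \<delta>'
    unfolding A_def by (meson order_trans)
  have "\<exists>z. \<forall>r>0. \<exists>c. dist c z < r \<and> A c r"
    using compact_cbox witness mono by (rule compact_cluster_of_witnesses)
  then obtain z where "\<forall>r>0. \<exists>c. dist c z < r \<and> A c r"
    by blast
  moreover have "\<epsilon> z / 2 > 0"
    using assms(2) by simp
  ultimately obtain c S where c: "dist c z < \<epsilon> z / 2" and S: "finite S" "card S = CARD('n) + 1"
      "inj_on blk S" "\<forall>x\<in>S. dmax x c \<le> \<epsilon> z / 2"
    unfolding A_def by blast
  have "dmax x z \<le> \<epsilon> z" if "x \<in> S" for x
  proof -
    have "dmax x z \<le> dmax x c + dmax c z"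
      by (rule dmax_triangle)
    also have "\<dots> \<le> \<epsilon> z / 2 + \<epsilon> z / 2"
      using S(4) that dmax_le_dist[of c z] c by (intro add_mono) auto
    finally show ?thesis
      by simp
  qed
  then show ?thesis
    using S by blast
qed

definition block_of :: "'a set set \<Rightarrow> 'a \<Rightarrow> 'a set" where
  "block_of P x = (THE X. X \<in> P \<and> x \<in> X)"

lemma block_of_in_partition:
  assumes "is_partition P S" "x \<in> S"
  shows "block_of P x \<in> P \<and> x \<in> block_of P x"
proof -
  have "\<exists>!X. X \<in> P \<and> x \<in> X"
  proof -
    obtain X where "X \<in> P" "x \<in> X"
      using assms unfolding is_partition_def by blast
    moreover have "Y = X" if "Y \<in> P" "x \<in> Y" for Y
      using assms(1) that \<open>X \<in> P\<close> \<open>x \<in> X\<close> unfolding is_partition_def by blast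
    ultimately show ?thesis
      by blast
  qed
  then show ?thesis
    unfolding block_of_def by (rule theI')
qed

lemma dmax_less_if_block_of_eq:
  assumes "is_partition P UNIV" "\<forall>X\<in>P. diam_max X < ereal D" "block_of P x = block_of P y"
  shows "dmax x y < D"
proof -
  have "block_of P x \<in> P" "x \<in> block_of P x" "y \<in> block_of P x"
    using block_of_in_partition[OF assms(1), of x] block_of_in_partition[OF assms(1), of y] assms(3) by auto
  then show ?thesis
    using assms(2) dmax_less_if_diam_max_less by blast
qed

lemma block_of_image_subset_nbhd_sets:
  assumes "is_partition P UNIV" "\<forall>x\<in>S. dmax x p \<le> r"
  shows "block_of P ` S \<subseteq> nbhd_sets P r p"
  using assms block_of_in_partition[OF assms(1)] unfolding nbhd_sets_def cball_max_def by blast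

theorem mainTheorem4:
  fixes P :: "(real^'n) set set" and D :: real and \<epsilon> :: "real^'n \<Rightarrow> real"
  assumes "is_partition P UNIV"
    and "D > 0"
    and "\<forall>X\<in>P. diam_max X < ereal D"
    and "\<forall>p. \<epsilon> p > 0"
  shows "\<exists>p. \<exists>F \<subseteq> nbhd_sets P (\<epsilon> p) p. finite F \<and> card F = CARD('n) + 1"
proof -
  have "\<exists>z S. finite S \<and> card S = CARD('n) + 1 \<and> inj_on (block_of P) S \<and>
      (\<forall>x\<in>S. dmax x z \<le> \<epsilon> z)"
    using dmax_less_if_block_of_eq[OF assms(1,3)] assms(4)
    by (rule exists_point_near_distinct_fibres)
  then obtain z S where S: "finite S" "card S = CARD('n) + 1" "inj_on (block_of P) S"
      and near: "\<forall>x\<in>S. dmax x z \<le> \<epsilon> z"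
    by blast
  have "block_of P ` S \<subseteq> nbhd_sets P (\<epsilon> z) z"
    using assms(1) near by (rule block_of_image_subset_nbhd_sets)
  moreover have "card (block_of P ` S) = CARD('n) + 1"
    using card_image[OF S(3)] S(2) by simp
  ultimately show ?thesis
    using S(1) by (intro exI[of _ z] exI[of _ "block_of P ` S"]) simp
qed

end
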